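(* Let $n \in \mathbb{N}$, $X = L^2([0,1]^n)$, $Y = L^2([0,2]^n)$, and define $F : X \to Y$ by $[F(x)](s) = \int_{\mathbb{R}^n} x(s-t)\,x(t)\,dt$ for $s \in [0,2]^n$ (functions in $X$ extended by zero outside $[0,1]^n$). Then the equation $F(x) = y$ is locally ill-posed at every point $x^\dagger \in X$: for every $x^\dagger \in X$ and every $r>0$ there exists a sequence $\{x_k\} \subset X$ with $\|x_k - x^\dagger\|_X \le r$ for all $k$, such that $\|F(x_k) - F(x^\dagger)\|_Y \to 0$ but $\|x_k - x^\dagger\|_X \not\to 0$ as $k \to \infty$.
   Context: All functions are real-valued; $L^2([0,1]^n)$ (resp. $L^2([0,2]^n)$) denotes the real functions in $L^2(\mathbb{R}^n)$ vanishing a.e. outside $[0,1]^n$ (resp. $[0,2]^n$), with the usual $L^2$ norm. *)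

theory Defs
  imports "HOL-Analysis.Analysis"
begin

text \<open>Real functions on R^n (R^n modelled by a Euclidean space 'a of dimension n),
  square integrable w.r.t. Lebesgue measure and vanishing a.e. outside the box C.\<close>
definition L2_on :: "'a::euclidean_space set \<Rightarrow> ('a \<Rightarrow> real) set" where
  "L2_on C = {f. f \<in> borel_measurable lebesgue
                 \<and> integrable lebesgue (\<lambda>x. (f x)\<^sup>2)
                 \<and> (AE x in lebesgue. x \<notin> C \<longrightarrow> f x = 0)}"

definition L2_norm :: "('a::euclidean_space \<Rightarrow> real) \<Rightarrow> real" where
  "L2_norm f = sqrt (LINT x|lebesgue. (f x)\<^sup>2)"

text \<open>The autoconvolution operator F, [F x](s) = int x(s-t) x(t) dt for s in [0,2]^n
  (and 0 outside [0,2]^n, so that F x is an element of L^2([0,2]^n)).\<close>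
definition autoconv :: "('a::euclidean_space \<Rightarrow> real) \<Rightarrow> ('a \<Rightarrow> real)" where
  "autoconv x s = (if s \<in> cbox 0 (2 *\<^sub>R One)
                   then (LINT t|lebesgue. x (s - t) * x t) else 0)"

end

theory Submission
  imports Defs
begin

text \<open>Perturb \<open>x\<^sup>\<dagger>\<close> by \<open>h = c \<cdot> 1\<^bsub>[0,a]\<^sup>n\<^esub>\<close>, the height \<open>c\<close> chosen so that \<open>\<parallel>h\<parallel> = r\<close>, and let
  \<open>a \<rightarrow> 0\<close>. On \<open>[0,2]\<^sup>n\<close> we have \<open>F(x\<^sup>\<dagger> + h) - F(x\<^sup>\<dagger>) = 2 x\<^sup>\<dagger> * h + h * h\<close>. The self-convolution
  \<open>h * h\<close> is bounded by \<open>r\<^sup>2\<close> and supported in \<open>[0,2a]\<^sup>n\<close>, and by Cauchy-Schwarz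
  \<open>|(x\<^sup>\<dagger> * h)(s)|\<^sup>2\<close> is at most \<open>r\<^sup>2\<close> times the integral of \<open>(x\<^sup>\<dagger>)\<^sup>2\<close> over a translate of
  \<open>[0,a]\<^sup>n\<close>, which tends to \<open>0\<close> uniformly in \<open>s\<close> by absolute continuity of the integral.
  So the data converge while the perturbations keep norm \<open>r\<close>.\<close>

lemma L2_on_UNIV_iff:
  "f \<in> L2_on UNIV \<longleftrightarrow> f \<in> borel_measurable lebesgue \<and> integrable lebesgue (\<lambda>x. (f x)\<^sup>2)"
  by (simp add: L2_on_def)

lemma L2_on_imp_L2_on_UNIV: "f \<in> L2_on C \<Longrightarrow> f \<in> L2_on UNIV"
  by (simp add: L2_on_def)

lemma integrable_mult_square_integrable:
  fixes f g :: "'a \<Rightarrow> real"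
  assumes "f \<in> borel_measurable M" "g \<in> borel_measurable M"
    "integrable M (\<lambda>x. (f x)\<^sup>2)" "integrable M (\<lambda>x. (g x)\<^sup>2)"
  shows "integrable M (\<lambda>x. f x * g x)"
proof (rule Bochner_Integration.integrable_bound[where f="\<lambda>x. ((f x)\<^sup>2 + (g x)\<^sup>2) / 2"])
  show "integrable M (\<lambda>x. ((f x)\<^sup>2 + (g x)\<^sup>2) / 2)" using assms by auto
  show "(\<lambda>x. f x * g x) \<in> borel_measurable M" using assms by measurable
  have "norm (f x * g x) \<le> norm (((f x)\<^sup>2 + (g x)\<^sup>2) / 2)" for x
  proof -
    have "0 \<le> (\<bar>f x\<bar> - \<bar>g x\<bar>)\<^sup>2" by simp
    then show ?thesis by (simp add: power2_eq_square abs_mult algebra_simps)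
  qed
  then show "AE x in M. norm (f x * g x) \<le> norm (((f x)\<^sup>2 + (g x)\<^sup>2) / 2)" by simp
qed

lemma L2_on_add:
  assumes "f \<in> L2_on C" "g \<in> L2_on C"
  shows "(\<lambda>x. f x + g x) \<in> L2_on C"
proof -
  have [measurable]: "f \<in> borel_measurable lebesgue" "g \<in> borel_measurable lebesgue"
    and "integrable lebesgue (\<lambda>x. (f x)\<^sup>2)" "integrable lebesgue (\<lambda>x. (g x)\<^sup>2)"
    and "AE x in lebesgue. x \<notin> C \<longrightarrow> f x = 0" "AE x in lebesgue. x \<notin> C \<longrightarrow> g x = 0"
    using assms by (auto simp: L2_on_def)
  moreover have "integrable lebesgue (\<lambda>x. f x * g x)"
    by (rule integrable_mult_square_integrable) fact+
  ultimately have "integrable lebesgue (\<lambda>x. (f x)\<^sup>2 + 2 * (f x * g x) + (g x)\<^sup>2)"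
    and "AE x in lebesgue. x \<notin> C \<longrightarrow> f x + g x = 0"
    by auto
  then show ?thesis by (simp add: L2_on_def power2_sum ac_simps)
qed

lemma lebesgue_reflect:
  fixes s :: "'a::euclidean_space"
  shows "distr lebesgue lebesgue (\<lambda>x. s - x) = lebesgue"
    and "(\<lambda>x. s - x) \<in> lebesgue \<rightarrow>\<^sub>M lebesgue"
proof -
  have affine: "(\<lambda>x. s + (\<Sum>j\<in>Basis. ((-1) * (x \<bullet> j)) *\<^sub>R j)) = (\<lambda>x. s - x)"
  proof
    fix x :: 'a
    have "(\<Sum>j\<in>Basis. ((-1) * (x \<bullet> j)) *\<^sub>R j) = - (\<Sum>j\<in>Basis. (x \<bullet> j) *\<^sub>R j)"
      by (simp add: sum_negf)
    then show "s + (\<Sum>j\<in>Basis. ((-1) * (x \<bullet> j)) *\<^sub>R j) = s - x"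
      by (simp add: euclidean_representation)
  qed
  have "lebesgue = density (distr lebesgue lebesgue (\<lambda>x. s - x)) (\<lambda>_. \<Prod>j\<in>(Basis::'a set). \<bar>-1::real\<bar>)"
    using lebesgue_affine_euclidean[of "\<lambda>_. -1" s] affine by simp
  then show "distr lebesgue lebesgue (\<lambda>x. s - x) = lebesgue"
    by (simp add: density_1)
  show "(\<lambda>x. s - x) \<in> lebesgue \<rightarrow>\<^sub>M lebesgue"
    using lebesgue_affine_measurable[of "\<lambda>_. -1" s] affine by simp
qed

lemma integral_lebesgue_reflect:
  fixes f :: "'a::euclidean_space \<Rightarrow> real"
  assumes "f \<in> borel_measurable lebesgue"
  shows "(LINT t|lebesgue. f (s - t)) = (LINT t|lebesgue. f t)"
  using integral_distr[OF lebesgue_reflect(2) assms] by (simp add: lebesgue_reflect(1))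

lemma L2_on_UNIV_reflect:
  assumes "f \<in> L2_on UNIV"
  shows "(\<lambda>t. f (s - t)) \<in> L2_on UNIV"
proof -
  have f: "f \<in> borel_measurable lebesgue" and "integrable lebesgue (\<lambda>x. (f x)\<^sup>2)"
    using assms by (auto simp: L2_on_UNIV_iff)
  then have "integrable (distr lebesgue lebesgue (\<lambda>t. s - t)) (\<lambda>x. (f x)\<^sup>2)"
    by (simp add: lebesgue_reflect(1))
  then have "integrable lebesgue (\<lambda>t. (f (s - t))\<^sup>2)"
    using integrable_distr_eq[OF lebesgue_reflect(2), of "\<lambda>x. (f x)\<^sup>2"] f by simp
  moreover have "(\<lambda>t. f (s - t)) \<in> borel_measurable lebesgue"
    using measurable_compose[OF lebesgue_reflect(2) f] by simp
  ultimately show ?thesis by (simp add: L2_on_UNIV_iff)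
qed

definition convolution :: "('a::euclidean_space \<Rightarrow> real) \<Rightarrow> ('a \<Rightarrow> real) \<Rightarrow> 'a \<Rightarrow> real" where
  "convolution f g s = (LINT t|lebesgue. f (s - t) * g t)"

lemma autoconv_eq_convolution:
  "autoconv x s = (if s \<in> cbox 0 (2 *\<^sub>R One) then convolution x x s else 0)"
  by (simp add: autoconv_def convolution_def)

lemma convolution_commute:
  assumes "f \<in> borel_measurable lebesgue" "g \<in> borel_measurable lebesgue"
  shows "convolution f g s = convolution g f s"
proof -
  have "(\<lambda>u. g u * f (s - u)) \<in> borel_measurable lebesgue"
    using assms measurable_compose[OF lebesgue_reflect(2) assms(1)] by measurable
  from integral_lebesgue_reflect[OF this, of s] show ?thesis
    by (simp add: convolution_def mult.commute)
qed

lemma integrable_convolution_integrand: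
  assumes "f \<in> L2_on UNIV" "g \<in> L2_on UNIV"
  shows "integrable lebesgue (\<lambda>t. f (s - t) * g t)"
  using L2_on_UNIV_reflect[OF assms(1), of s] assms(2)
  by (intro integrable_mult_square_integrable) (auto simp: L2_on_UNIV_iff)

lemma convolution_add_self:
  assumes f: "f \<in> L2_on UNIV" and h: "h \<in> L2_on UNIV"
  shows "convolution (\<lambda>t. f t + h t) (\<lambda>t. f t + h t) s
           = convolution f f s + 2 * convolution f h s + convolution h h s"
proof -
  have "convolution (\<lambda>t. f t + h t) (\<lambda>t. f t + h t) s
          = (LINT t|lebesgue. ((f (s - t) * f t + f (s - t) * h t) + h (s - t) * f t) + h (s - t) * h t)"
    by (simp add: convolution_def algebra_simps)
  also have "\<dots> = convolution f f s + convolution f h s + convolution h f s + convolution h h s"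
    using integrable_convolution_integrand[OF f f] integrable_convolution_integrand[OF f h]
      integrable_convolution_integrand[OF h f] integrable_convolution_integrand[OF h h]
    by (simp add: convolution_def)
  also have "convolution h f s = convolution f h s"
    using f h by (intro convolution_commute) (auto simp: L2_on_UNIV_iff)
  finally show ?thesis by simp
qed

lemma square_set_integral_le:
  fixes g :: "'a \<Rightarrow> real"
  assumes [measurable]: "g \<in> borel_measurable M" and g2: "integrable M (\<lambda>x. (g x)\<^sup>2)"
    and S: "S \<in> fmeasurable M"
  shows "(\<integral>x. g x * indicator S x \<partial>M)\<^sup>2 \<le> measure M S * (\<integral>x. (g x)\<^sup>2 * indicator S x \<partial>M)"
proof (cases "measure M S = 0")
  case True
  then have "S \<in> null_sets M"
    using S by (simp add: null_sets_def emeasure_eq_measure2)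
  then have "AE x in M. g x * indicator S x = 0"
    by (auto dest: AE_not_in)
  then show ?thesis by (simp add: integral_eq_zero_AE)
next
  case False
  define I where "I = (\<integral>x. g x * indicator S x \<partial>M)"
  define J where "J = (\<integral>x. (g x)\<^sup>2 * indicator S x \<partial>M)"
  define \<mu> where "\<mu> = measure M S"
  have \<mu>: "\<mu> > 0" using False by (simp add: \<mu>_def zero_less_measure_iff)
  have S_sets: "S \<in> sets M" and iS: "integrable M (indicator S :: 'a \<Rightarrow> real)"
    using S by (auto simp: fmeasurable_def)
  have "(\<lambda>x. (indicator S x :: real)\<^sup>2) = indicator S"
    by (auto split: split_indicator)
  then have "integrable M (\<lambda>x. (indicator S x :: real)\<^sup>2)"
    using iS by simp
  then have igS: "integrable M (\<lambda>x. g x * indicator S x)"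
    using S_sets by (intro integrable_mult_square_integrable g2) auto
  have ig2S: "integrable M (\<lambda>x. (g x)\<^sup>2 * indicator S x)"
    using integrable_mult_indicator[OF S_sets g2] by (simp add: mult.commute)
  define c where "c = I / \<mu>"
  \<comment> \<open>\<open>c\<close> is the mean of \<open>g\<close> on \<open>S\<close>; expanding \<open>\<integral>\<^sub>S (g - c)\<^sup>2 \<ge> 0\<close> gives the claim\<close>
  have "0 \<le> (\<integral>x. (g x - c)\<^sup>2 * indicator S x \<partial>M)"
    by (intro integral_nonneg_AE) auto
  also have "\<dots> = (\<integral>x. (g x)\<^sup>2 * indicator S x - 2 * c * (g x * indicator S x) + c\<^sup>2 * indicator S x \<partial>M)"
    by (intro Bochner_Integration.integral_cong) (auto simp: power2_diff algebra_simps split: split_indicator)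
  also have "\<dots> = J - 2 * c * I + c\<^sup>2 * \<mu>"
    using ig2S igS iS S_sets by (simp add: Int_absorb1 sets.sets_into_space I_def J_def \<mu>_def)
  also have "\<dots> = J - I\<^sup>2 / \<mu>"
    using \<mu> by (simp add: c_def power2_eq_square field_simps)
  finally show ?thesis
    using \<mu> by (simp add: I_def J_def \<mu>_def field_simps)
qed

lemma absolutely_continuous_integral:
  fixes f :: "'a \<Rightarrow> real"
  assumes f: "integrable M f" and f_nonneg: "\<And>x. 0 \<le> f x" and e: "e > 0"
  shows "\<exists>d>0. \<forall>A\<in>fmeasurable M. measure M A < d \<longrightarrow> (\<integral>x. f x * indicator A x \<partial>M) < e"
proof -
  have f_meas[measurable]: "f \<in> borel_measurable M" using f by auto
  have "(\<lambda>N::nat. \<integral>x. f x - min (f x) (real N) \<partial>M) \<longlonglongrightarrow> (\<integral>x. 0 \<partial>M)"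
  proof (rule integral_dominated_convergence[where w=f])
    have "(\<lambda>N::nat. f x - min (f x) (real N)) \<longlonglongrightarrow> 0" for x
    proof (rule tendsto_eventually)
      show "\<forall>\<^sub>F N in sequentially. f x - min (f x) (real N) = 0"
        using eventually_ge_at_top[of "nat \<lceil>f x\<rceil>"]
        by eventually_elim (smt (verit) of_nat_ceiling of_nat_mono)
    qed
    then show "AE x in M. (\<lambda>N::nat. f x - min (f x) (real N)) \<longlonglongrightarrow> 0" by simp
    show "\<And>N. AE x in M. norm (f x - min (f x) (real N)) \<le> f x"
      using f_nonneg by auto
  qed (use f in auto)
  then obtain N :: nat where N: "(\<integral>x. f x - min (f x) (real N) \<partial>M) < e / 2"
    using e by (auto dest!: LIMSEQ_D[where r="e / 2"] simp: abs_less_iff)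
  have min_int: "integrable M (\<lambda>x. min (f x) (real N))"
    by (rule Bochner_Integration.integrable_bound[OF f]) (use f_nonneg in auto)
  define d where "d = e / (2 * (real N + 1))"
  \<comment> \<open>below height \<open>N\<close> the integral over \<open>A\<close> is at most \<open>N \<cdot> measure A\<close>, above it at most \<open>e/2\<close>\<close>
  have "(\<integral>x. f x * indicator A x \<partial>M) < e" if A: "A \<in> fmeasurable M" "measure M A < d" for A
  proof -
    have A_sets: "A \<in> sets M" and iA: "integrable M (indicator A :: 'a \<Rightarrow> real)"
      using A by (auto simp: fmeasurable_def)
    have "(\<integral>x. f x * indicator A x \<partial>M)
            \<le> (\<integral>x. (f x - min (f x) (real N)) + real N * indicator A x \<partial>M)"
      using integrable_mult_indicator[OF A_sets f] f min_int iA f_nonneg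
      by (intro integral_mono) (auto simp: mult.commute split: split_indicator)
    also have "\<dots> = (\<integral>x. f x - min (f x) (real N) \<partial>M) + real N * measure M A"
      using f min_int iA A_sets by (simp add: Int_absorb1 sets.sets_into_space)
    also have "\<dots> < e / 2 + real N * d"
      using N A(2) by (smt (verit) mult_left_mono of_nat_0_le_iff)
    also have "\<dots> \<le> e"
      using e by (simp add: d_def field_simps)
    finally show ?thesis .
  qed
  moreover have "d > 0" using e by (simp add: d_def)
  ultimately show ?thesis by blast
qed

lemma measure_lebesgue_cube:
  fixes x :: "'a::euclidean_space"
  assumes "0 \<le> b"
  shows "measure lebesgue (cbox x (x + b *\<^sub>R One)) = b ^ DIM('a)"
  using measure_lborel_cbox[of x "x + b *\<^sub>R One"] assms
  by (simp add: measure_completion inner_simps)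

definition bump :: "real \<Rightarrow> real \<Rightarrow> 'a::euclidean_space \<Rightarrow> real" where
  "bump r a t = r / sqrt (a ^ DIM('a)) * indicator (cbox 0 (a *\<^sub>R One)) t"

lemma bump_measurable[measurable]: "bump r a \<in> borel_measurable lebesgue"
  unfolding bump_def[abs_def]
  by (intro borel_measurable_times borel_measurable_const borel_measurable_indicator) simp

lemma square_bump:
  "(bump r a t)\<^sup>2 = (r / sqrt (a ^ DIM('a))) ^ 2 * indicator (cbox 0 (a *\<^sub>R One)) (t::'a::euclidean_space)"
  by (simp add: bump_def power_mult_distrib split: split_indicator)

lemma bump_L2_on_UNIV: "bump r a \<in> L2_on UNIV"
proof -
  have "integrable lebesgue (indicator (cbox 0 (a *\<^sub>R One)) :: 'a \<Rightarrow> real)"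
    using lmeasurable_cbox[of 0 "a *\<^sub>R One"] by (auto simp: fmeasurable_def)
  then show ?thesis by (simp add: L2_on_UNIV_iff square_bump)
qed

lemma bump_L2_on_unit_cube:
  assumes "a \<le> 1"
  shows "bump r a \<in> (L2_on (cbox 0 One) :: ('a::euclidean_space \<Rightarrow> real) set)"
proof -
  have "bump r a t = 0" if "t \<notin> cbox 0 One" for t :: 'a
    using that assms by (auto simp: bump_def mem_box split: split_indicator)
  then show ?thesis
    using bump_L2_on_UNIV[of r a] by (simp add: L2_on_def)
qed

lemma L2_norm_bump:
  assumes "0 < a" "0 \<le> r"
  shows "L2_norm (bump r a :: 'a::euclidean_space \<Rightarrow> real) = r"
proof -
  have "(LINT t|lebesgue. (bump r a (t::'a))\<^sup>2) = (r / sqrt (a ^ DIM('a))) ^ 2 * a ^ DIM('a)"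
    using measure_lebesgue_cube[of a "0::'a"] assms by (simp add: square_bump)
  also have "\<dots> = r\<^sup>2"
    using assms by (simp add: power_divide)
  finally show ?thesis
    using assms by (simp add: L2_norm_def)
qed

lemma convolution_bump_right:
  fixes f :: "'a::euclidean_space \<Rightarrow> real"
  assumes "f \<in> borel_measurable lebesgue"
  shows "convolution f (bump r a) s
           = r / sqrt (a ^ DIM('a)) * (LINT u|lebesgue. f u * indicator (cbox (s - a *\<^sub>R One) s) u)"
proof -
  have "indicator (cbox 0 (a *\<^sub>R One)) (s - u) = (indicator (cbox (s - a *\<^sub>R One) s) u :: real)" for u
    by (auto simp: mem_box inner_diff_left algebra_simps split: split_indicator)
  then have "convolution (bump r a) f s
               = (LINT u|lebesgue. r / sqrt (a ^ DIM('a)) * (f u * indicator (cbox (s - a *\<^sub>R One) s) u))"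
    by (simp add: convolution_def bump_def ac_simps)
  with assms show ?thesis
    by (simp add: convolution_commute)
qed

lemma square_convolution_bump_right_le:
  fixes f :: "'a::euclidean_space \<Rightarrow> real"
  assumes f: "f \<in> L2_on UNIV" and a: "0 < a"
  shows "(convolution f (bump r a) s)\<^sup>2
           \<le> r\<^sup>2 * (LINT u|lebesgue. (f u)\<^sup>2 * indicator (cbox (s - a *\<^sub>R One) s) u)"
proof -
  define S where "S = cbox (s - a *\<^sub>R One) s"
  have mS: "measure lebesgue S = a ^ DIM('a)"
    using measure_lebesgue_cube[of a "s - a *\<^sub>R One"] a by (simp add: S_def)
  have "convolution f (bump r a) s = r / sqrt (a ^ DIM('a)) * (LINT u|lebesgue. f u * indicator S u)"
    using f by (simp add: convolution_bump_right L2_on_UNIV_iff S_def)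
  then have "(convolution f (bump r a) s)\<^sup>2
          = (r / sqrt (a ^ DIM('a)))\<^sup>2 * (LINT u|lebesgue. f u * indicator S u)\<^sup>2"
    by (simp only: power_mult_distrib)
  also have "\<dots> \<le> (r / sqrt (a ^ DIM('a)))\<^sup>2 * (measure lebesgue S * (LINT u|lebesgue. (f u)\<^sup>2 * indicator S u))"
    using f by (intro mult_left_mono square_set_integral_le) (auto simp: L2_on_UNIV_iff S_def)
  also have "\<dots> = r\<^sup>2 * (LINT u|lebesgue. (f u)\<^sup>2 * indicator S u)"
    using a by (simp add: mS power_divide)
  finally show ?thesis by (simp add: S_def)
qed

lemma abs_convolution_bump_bump_le:
  fixes s :: "'a::euclidean_space"
  assumes a: "0 < a"
  shows "\<bar>convolution (bump r a) (bump r a) s\<bar> \<le> r\<^sup>2 * indicator (cbox 0 ((2 * a) *\<^sub>R One)) s"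
proof (cases "s \<in> cbox 0 ((2 * a) *\<^sub>R One)")
  case True
  define c where "c = r / sqrt (a ^ DIM('a))"
  have "\<bar>convolution (bump r a) (bump r a) s\<bar> \<le> (LINT t|lebesgue. c\<^sup>2 * indicator (cbox 0 (a *\<^sub>R One)) (t::'a))"
    unfolding convolution_def
  proof (rule integral_abs_bound_integral)
    show "integrable lebesgue (\<lambda>t. bump r a (s - t) * bump r a t)"
      by (intro integrable_convolution_integrand bump_L2_on_UNIV)
    show "integrable lebesgue (\<lambda>t. c\<^sup>2 * indicator (cbox 0 (a *\<^sub>R One)) t)"
      using lmeasurable_cbox[of 0 "a *\<^sub>R One"] by (auto simp: fmeasurable_def)
    show "\<bar>bump r a (s - t) * bump r a t\<bar> \<le> c\<^sup>2 * indicator (cbox 0 (a *\<^sub>R One)) t" for t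
      by (auto simp: bump_def c_def abs_mult power2_eq_square split: split_indicator)
  qed
  also have "\<dots> = r\<^sup>2"
    using measure_lebesgue_cube[of a "0::'a"] a by (simp add: c_def power_divide)
  finally show ?thesis using True by simp
next
  case False
  have "bump r a (s - t) * bump r a t = 0" for t
  proof (rule ccontr)
    assume "bump r a (s - t) * bump r a t \<noteq> 0"
    then have "s - t \<in> cbox 0 (a *\<^sub>R One)" "t \<in> cbox 0 (a *\<^sub>R One)"
      by (auto simp: bump_def split: split_indicator_asm)
    then have "s \<in> cbox 0 ((2 * a) *\<^sub>R One)"
      by (auto simp: mem_box inner_diff_left) (smt (verit))+
    with False show False by simp
  qed
  then have "(\<lambda>t. bump r a (s - t) * bump r a t) = (\<lambda>t. 0)" by (rule ext)
  then show ?thesis using False by (simp add: convolution_def)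
qed

lemma square_autoconv_add_bump_diff_le:
  fixes x :: "'a::euclidean_space \<Rightarrow> real"
  assumes x: "x \<in> L2_on UNIV" and a: "0 < a" and \<epsilon>: "0 \<le> \<epsilon>"
    and small: "(LINT u|lebesgue. (x u)\<^sup>2 * indicator (cbox (s - a *\<^sub>R One) s) u) \<le> \<epsilon>"
  shows "(autoconv (\<lambda>t. x t + bump r a t) s - autoconv x s)\<^sup>2
           \<le> 8 * r\<^sup>2 * \<epsilon> * indicator (cbox 0 (2 *\<^sub>R One)) s
             + 2 * r ^ 4 * indicator (cbox 0 ((2 * a) *\<^sub>R One)) s"
proof (cases "s \<in> cbox 0 (2 *\<^sub>R One)")
  case True
  define X2 where "X2 = convolution x (bump r a) s"
  define X3 where "X3 = convolution (bump r a) (bump r a) s"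
  have "autoconv (\<lambda>t. x t + bump r a t) s - autoconv x s = 2 * X2 + X3"
    using True convolution_add_self[OF x bump_L2_on_UNIV]
    by (simp add: autoconv_eq_convolution X2_def X3_def)
  also have "(2 * X2 + X3)\<^sup>2 \<le> 8 * X2\<^sup>2 + 2 * X3\<^sup>2"
  proof -
    have "0 \<le> (2 * X2 - X3)\<^sup>2" by simp
    then show ?thesis by (simp add: power2_eq_square algebra_simps)
  qed
  also have "X2\<^sup>2 \<le> r\<^sup>2 * \<epsilon>"
    using square_convolution_bump_right_le[OF x a, of r s] small
    by (smt (verit) mult_left_mono zero_le_power2 X2_def)
  also have "X3\<^sup>2 \<le> r ^ 4 * indicator (cbox 0 ((2 * a) *\<^sub>R One)) s"
  proof -
    have "\<bar>X3\<bar>\<^sup>2 \<le> (r\<^sup>2 * indicator (cbox 0 ((2 * a) *\<^sub>R One)) s)\<^sup>2"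
      using abs_convolution_bump_bump_le[OF a, of r s] by (intro power_mono) (auto simp: X3_def)
    then show ?thesis by (auto split: split_indicator simp flip: power_mult)
  qed
  finally show ?thesis
    using True by simp
next
  case False
  then show ?thesis
    using \<epsilon> by (simp add: autoconv_eq_convolution)
qed

lemma integral_square_autoconv_add_bump_diff_le:
  fixes x :: "'a::euclidean_space \<Rightarrow> real"
  assumes x: "x \<in> L2_on UNIV" and a: "0 < a" and \<epsilon>: "0 \<le> \<epsilon>"
    and small: "\<And>s. (LINT u|lebesgue. (x u)\<^sup>2 * indicator (cbox (s - a *\<^sub>R One) s) u) \<le> \<epsilon>"
  shows "(LINT s|lebesgue. (autoconv (\<lambda>t. x t + bump r a t) s - autoconv x s)\<^sup>2)
           \<le> 8 * r\<^sup>2 * \<epsilon> * 2 ^ DIM('a) + 2 * r ^ 4 * (2 * a) ^ DIM('a)"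
proof -
  define G where "G s = 8 * r\<^sup>2 * \<epsilon> * indicator (cbox 0 (2 *\<^sub>R One)) s
                      + 2 * r ^ 4 * indicator (cbox 0 ((2 * a) *\<^sub>R One)) s" for s :: 'a
  have cube: "integrable lebesgue (indicator (cbox 0 (b *\<^sub>R One)) :: 'a \<Rightarrow> real)"
    "measure lebesgue (cbox 0 (b *\<^sub>R One) :: 'a set) = b ^ DIM('a)" if "0 \<le> b" for b
    using lmeasurable_cbox[of 0 "b *\<^sub>R One"] measure_lebesgue_cube[of b "0::'a"] that
    by (auto simp: fmeasurable_def)
  have "(LINT s|lebesgue. (autoconv (\<lambda>t. x t + bump r a t) s - autoconv x s)\<^sup>2) \<le> (LINT s|lebesgue. G s)"
  proof (rule integral_mono')
    show "integrable lebesgue G"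
      using cube a by (simp add: G_def[abs_def])
    show "(autoconv (\<lambda>t. x t + bump r a t) s - autoconv x s)\<^sup>2 \<le> G s" for s
      unfolding G_def by (rule square_autoconv_add_bump_diff_le[OF x a \<epsilon> small])
    show "0 \<le> G s" for s
      using \<epsilon> by (simp add: G_def)
  qed
  also have "\<dots> = 8 * r\<^sup>2 * \<epsilon> * 2 ^ DIM('a) + 2 * r ^ 4 * (2 * a) ^ DIM('a)"
    using cube a by (simp add: G_def[abs_def])
  finally show ?thesis .
qed

lemma L2_norm_autoconv_add_bump_diff_tendsto:
  fixes x :: "'a::euclidean_space \<Rightarrow> real"
  assumes x: "x \<in> L2_on UNIV" and a: "a \<longlonglongrightarrow> 0" "\<And>k. 0 < a k"
  shows "(\<lambda>k. L2_norm (\<lambda>s. autoconv (\<lambda>t. x t + bump r (a k) t) s - autoconv x s)) \<longlonglongrightarrow> 0"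
proof -
  define n where "n = DIM('a)"
  define D where "D k = (LINT s|lebesgue. (autoconv (\<lambda>t. x t + bump r (a k) t) s - autoconv x s)\<^sup>2)" for k
  have D_nonneg: "0 \<le> D k" for k
    unfolding D_def by (intro integral_nonneg_AE) auto
  have "D \<longlonglongrightarrow> 0"
  proof (rule order_tendstoI)
    show "\<forall>\<^sub>F k in sequentially. c < D k" if "c < 0" for c
      using that D_nonneg by (intro always_eventually allI) (rule less_le_trans)
  next
    fix e :: real
    assume e: "0 < e"
    define \<epsilon> where "\<epsilon> = e / (16 * (r\<^sup>2 + 1) * 2 ^ n)"
    have \<epsilon>: "0 < \<epsilon>"
      unfolding \<epsilon>_def using e by (intro divide_pos_pos mult_pos_pos) (auto intro: add_nonneg_pos)
    have cross_small: "8 * r\<^sup>2 * \<epsilon> * 2 ^ n < e / 2"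
      using e by (simp add: \<epsilon>_def field_simps add_pos_nonneg)
    have x2: "integrable lebesgue (\<lambda>u. (x u)\<^sup>2)" using x by (simp add: L2_on_UNIV_iff)
    obtain \<delta> where \<delta>: "0 < \<delta>" and abs_cont: "\<forall>A\<in>fmeasurable lebesgue. measure lebesgue A < \<delta>
        \<longrightarrow> (LINT u|lebesgue. (x u)\<^sup>2 * indicator A u) < \<epsilon>"
      using absolutely_continuous_integral[OF x2 _ \<epsilon>] by auto
    have "n > 0" by (simp add: n_def)
    then have lim_vol: "(\<lambda>k. a k ^ n) \<longlonglongrightarrow> 0"
      and lim_self: "(\<lambda>k. 2 * r ^ 4 * (2 * a k) ^ n) \<longlonglongrightarrow> 0"
      using a(1) by (auto intro!: tendsto_eq_intros)
    have "\<forall>\<^sub>F k in sequentially. a k ^ n < \<delta>"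
      using lim_vol \<delta> by (rule order_tendstoD(2))
    moreover have "\<forall>\<^sub>F k in sequentially. 2 * r ^ 4 * (2 * a k) ^ n < e / 2"
      by (rule order_tendstoD(2)[OF lim_self]) (use e in simp)
    ultimately show "\<forall>\<^sub>F k in sequentially. D k < e"
    proof eventually_elim
      case (elim k)
      have "(LINT u|lebesgue. (x u)\<^sup>2 * indicator (cbox (s - a k *\<^sub>R One) s) u) \<le> \<epsilon>" for s
      proof -
        have "measure lebesgue (cbox (s - a k *\<^sub>R One) s) < \<delta>"
          using measure_lebesgue_cube[of "a k" "s - a k *\<^sub>R One"] a(2)[of k] elim(1)
          by (simp add: n_def)
        then show ?thesis
          using abs_cont lmeasurable_cbox by (meson less_imp_le)
      qed
      then have "D k \<le> 8 * r\<^sup>2 * \<epsilon> * 2 ^ n + 2 * r ^ 4 * (2 * a k) ^ n"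
        unfolding D_def n_def using x a(2) \<epsilon> by (intro integral_square_autoconv_add_bump_diff_le) auto
      with cross_small elim(2) show "D k < e" by linarith
    qed
  qed
  then have "(\<lambda>k. sqrt (D k)) \<longlonglongrightarrow> 0"
    using tendsto_real_sqrt by fastforce
  then show ?thesis by (simp add: L2_norm_def D_def)
qed

theorem theorem4p2:
  fixes xd :: "'a::euclidean_space \<Rightarrow> real" and r :: real
  assumes "xd \<in> L2_on (cbox 0 One)" and "r > 0"
  shows "\<exists>xk :: nat \<Rightarrow> ('a \<Rightarrow> real).
           (\<forall>k. xk k \<in> L2_on (cbox 0 One))
         \<and> (\<forall>k. L2_norm (\<lambda>t. xk k t - xd t) \<le> r)
         \<and> ((\<lambda>k. L2_norm (\<lambda>s. autoconv (xk k) s - autoconv xd s)) \<longlonglongrightarrow> 0)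
         \<and> \<not> ((\<lambda>k. L2_norm (\<lambda>t. xk k t - xd t)) \<longlonglongrightarrow> 0)"
proof -
  define a :: "nat \<Rightarrow> real" where "a k = inverse (real (Suc k))" for k
  define xk where "xk k = (\<lambda>t. xd t + bump r (a k) t)" for k
  have a_pos: "0 < a k" and a_le_1: "a k \<le> 1" for k
    by (auto simp: a_def field_simps)
  have "a \<longlonglongrightarrow> 0"
    unfolding a_def[abs_def] by (rule LIMSEQ_inverse_real_of_nat)
  then have "(\<lambda>k. L2_norm (\<lambda>s. autoconv (xk k) s - autoconv xd s)) \<longlonglongrightarrow> 0"
    unfolding xk_def using L2_on_imp_L2_on_UNIV[OF assms(1)] a_pos
    by (intro L2_norm_autoconv_add_bump_diff_tendsto)
  moreover have "xk k \<in> L2_on (cbox 0 One)" for k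
    unfolding xk_def using assms(1) bump_L2_on_unit_cube[OF a_le_1] by (rule L2_on_add)
  moreover have "L2_norm (\<lambda>t. xk k t - xd t) = r" for k
    using assms(2) a_pos by (simp add: xk_def L2_norm_bump)
  ultimately show ?thesis
    using assms(2) by (intro exI[of _ xk]) (simp add: LIMSEQ_const_iff)
qed

end
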